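(* For every braid $b\in\mathcal{B}_n$ one has $\Lambda(\hat b)=\Lambda(\widehat{b\Delta_n^2})$ and $\Lambda_{tr}(b)=\Lambda_{tr}(b\Delta_n)$. For every braid $b\in\mathcal{B}_3$ one has $\Lambda_{pb}(b)=\Lambda_{pb}(b\Delta_3)$.
   Context: $C_n(\mathbb{C})=\{(z_1,\dots,z_n): z_i\ne z_j\ (i\ne j)\}$, $\mathcal{S}_n$ acts by permuting coordinates; $\mathcal{B}_n=\pi_1(C_n(\mathbb{C})/\mathcal{S}_n)$; $\Delta_n$ is the Garside element ($\Delta_n^2$ the full twist); $\hat b$ is the conjugacy class of $b$. $\mathcal{E}^{tr}=C_n(\mathbb{R})/\mathcal{S}_n$ is connected and simply connected so $\mathcal{B}_n\cong\pi_1(C_n(\mathbb{C})/\mathcal{S}_n,\mathcal{E}^{tr})$; $b_{tr}$ is the image of $b$. For $n=3$, $\mathcal{E}_{pb}$ is the set of unordered triples with one real point and a pair of complex conjugate non-real points (connected, simply connected), and $b_{pb}$ the image of $b$ in $\pi_1(C_3(\mathbb{C})/\mathcal{S}_3,\mathcal{E}_{pb})$. A map from an open rectangle $R$ (sides parallel to the axes), continuous on $\bar R$, represents $b_{tr}$ (resp. $b_{pb}$) if it maps the open horizontal sides into $\mathcal{E}^{tr}$ (resp. $\mathcal{E}_{pb}$) and its restriction to the closure of every maximal vertical segment represents the class; $\Lambda_{tr}(b)$, $\Lambda_{pb}(b)$ are the infima of $\lambda(R)$ = (vertical side length)/(horizontal side length) over rectangles admitting holomorphic representing maps. For an annulus $A=\{r<|z|<R\}$,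 $\lambda(A)=2\pi/\log(R/r)$; a map $A\to C_n(\mathbb{C})/\mathcal{S}_n$ represents $\hat b$ if its restriction to a circle $|z|=\rho$ in $A$ represents $\hat b$; $\Lambda(\hat b)$ is the infimum of $\lambda(A)$ over annuli admitting a holomorphic representing map. *)

theory Defs
  imports "HOL-Complex_Analysis.Complex_Analysis"
begin

text \<open>Points of the symmetrized configuration space C_n(C)/S_n are represented as
  sets of complex numbers with exactly n elements.  Since the quotient map
  C_n(C) -> C_n(C)/S_n is an unbranched holomorphic covering, a map into
  C_n(C)/S_n is continuous (resp. holomorphic) iff it locally lifts to a
  continuous (resp. holomorphic) map into C_n(C), i.e. locally it is given by
  n pairwise distinct continuous (holomorphic) functions.\<close>

definition conf_map_on :: "nat \<Rightarrow> ('a::metric_space) set \<Rightarrow> ('a \<Rightarrow> complex set) \<Rightarrow> bool" where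
  "conf_map_on n A f \<longleftrightarrow>
     (\<forall>x\<in>A. \<exists>e>0. \<exists>g::nat \<Rightarrow> 'a \<Rightarrow> complex.
        (\<forall>i<n. continuous_on (A \<inter> ball x e) (g i)) \<and>
        (\<forall>y\<in>A \<inter> ball x e. inj_on (\<lambda>i. g i y) {..<n} \<and> f y = (\<lambda>i. g i y) ` {..<n}))"

definition conf_holo_on :: "nat \<Rightarrow> complex set \<Rightarrow> (complex \<Rightarrow> complex set) \<Rightarrow> bool" where
  "conf_holo_on n A f \<longleftrightarrow> open A \<and>
     (\<forall>x\<in>A. \<exists>e>0. \<exists>g::nat \<Rightarrow> complex \<Rightarrow> complex.
        (\<forall>i<n. g i holomorphic_on (A \<inter> ball x e)) \<and>
        (\<forall>y\<in>A \<inter> ball x e. inj_on (\<lambda>i. g i y) {..<n} \<and> f y = (\<lambda>i. g i y) ` {..<n}))"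

definition cjoin :: "(real \<Rightarrow> complex set) \<Rightarrow> (real \<Rightarrow> complex set) \<Rightarrow> real \<Rightarrow> complex set" where
  "cjoin p q t = (if t \<le> 1/2 then p (2 * t) else q (2 * t - 1))"

definition crev :: "(real \<Rightarrow> complex set) \<Rightarrow> real \<Rightarrow> complex set" where
  "crev p t = p (1 - t)"

definition conf_loop :: "nat \<Rightarrow> complex set \<Rightarrow> (real \<Rightarrow> complex set) \<Rightarrow> bool" where
  "conf_loop n x p \<longleftrightarrow> conf_map_on n {0..1} p \<and> p 0 = x \<and> p 1 = x"

text \<open>Homotopy of paths with endpoints moving in a set E (equality in pi_1(X,E)).\<close>
definition conf_rel_homotopic ::
  "nat \<Rightarrow> complex set set \<Rightarrow> (real \<Rightarrow> complex set) \<Rightarrow> (real \<Rightarrow> complex set) \<Rightarrow> bool" where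
  "conf_rel_homotopic n E p q \<longleftrightarrow>
     (\<exists>H :: real \<times> real \<Rightarrow> complex set. conf_map_on n ({0..1} \<times> {0..1}) H \<and>
        (\<forall>t\<in>{0..1}. H (0, t) = p t \<and> H (1, t) = q t) \<and>
        (\<forall>s\<in>{0..1}. H (s, 0) \<in> E \<and> H (s, 1) \<in> E))"

text \<open>Free homotopy of loops (equality of conjugacy classes).\<close>
definition conf_free_homotopic ::
  "nat \<Rightarrow> (real \<Rightarrow> complex set) \<Rightarrow> (real \<Rightarrow> complex set) \<Rightarrow> bool" where
  "conf_free_homotopic n p q \<longleftrightarrow>
     (\<exists>H :: real \<times> real \<Rightarrow> complex set. conf_map_on n ({0..1} \<times> {0..1}) H \<and>
        (\<forall>t\<in>{0..1}. H (0, t) = p t \<and> H (1, t) = q t) \<and>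
        (\<forall>s\<in>{0..1}. H (s, 0) = H (s, 1)))"

text \<open>Base point (in E^tr) and the Garside element / full twist as loops at it.\<close>
definition base_conf :: "nat \<Rightarrow> complex set" where
  "base_conf n = (\<lambda>k. complex_of_real (real k - (real n + 1) / 2)) ` {1..n}"

definition half_twist :: "nat \<Rightarrow> real \<Rightarrow> complex set" where
  "half_twist n t = (\<lambda>z. exp (\<i> * of_real (pi * t)) * z) ` base_conf n"

definition full_twist :: "nat \<Rightarrow> real \<Rightarrow> complex set" where
  "full_twist n t = (\<lambda>z. exp (\<i> * of_real (2 * pi * t)) * z) ` base_conf n"

definition E_tr :: "complex set set" where
  "E_tr = {S. S \<subseteq> \<real>}"

definition E_pb :: "complex set set" where
  "E_pb = {S. \<exists>x w. x \<in> \<real> \<and> Im w \<noteq> 0 \<and> S = {x, w, cnj w}}"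

text \<open>Path from the base point {-1,0,1} to {-i,0,i} in E_pb, used for the
  identification pi_1(X, base) = pi_1(X, E_pb).\<close>
definition pb_connect :: "real \<Rightarrow> complex set" where
  "pb_connect t = {0, exp (\<i> * of_real (pi * t / 2)), - exp (\<i> * of_real (pi * t / 2))}"

definition rect :: "real \<Rightarrow> real \<Rightarrow> real \<Rightarrow> real \<Rightarrow> complex set" where
  "rect a b c d = {z. a < Re z \<and> Re z < b \<and> c < Im z \<and> Im z < d}"

definition rect_closed :: "real \<Rightarrow> real \<Rightarrow> real \<Rightarrow> real \<Rightarrow> complex set" where
  "rect_closed a b c d = {z. a \<le> Re z \<and> Re z \<le> b \<and> c \<le> Im z \<and> Im z \<le> d}"

definition represents_rect ::
  "nat \<Rightarrow> complex set set \<Rightarrow> (real \<Rightarrow> complex set) \<Rightarrow> real \<Rightarrow> real \<Rightarrow> real \<Rightarrow> real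
     \<Rightarrow> (complex \<Rightarrow> complex set) \<Rightarrow> bool" where
  "represents_rect n E p a b c d f \<longleftrightarrow>
     conf_map_on n (rect_closed a b c d) f \<and>
     (\<forall>x. a < x \<and> x < b \<longrightarrow> f (Complex x c) \<in> E \<and> f (Complex x d) \<in> E) \<and>
     (\<forall>x. a < x \<and> x < b \<longrightarrow>
        conf_rel_homotopic n E (\<lambda>t. f (Complex x (c + t * (d - c)))) p)"

definition Lambda_rel :: "nat \<Rightarrow> complex set set \<Rightarrow> (real \<Rightarrow> complex set) \<Rightarrow> ereal" where
  "Lambda_rel n E p = Inf {ereal ((d - c) / (b - a)) | a b c d.
       a < b \<and> c < d \<and>
       (\<exists>f. conf_holo_on n (rect a b c d) f \<and> represents_rect n E p a b c d f)}"

definition Lambda_tr :: "nat \<Rightarrow> (real \<Rightarrow> complex set) \<Rightarrow> ereal" where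
  "Lambda_tr n p = Lambda_rel n E_tr p"

definition Lambda_pb :: "(real \<Rightarrow> complex set) \<Rightarrow> ereal" where
  "Lambda_pb p = Lambda_rel 3 E_pb (cjoin (crev pb_connect) (cjoin p pb_connect))"

definition annulus :: "real \<Rightarrow> real \<Rightarrow> complex set" where
  "annulus r R = {z. r < cmod z \<and> cmod z < R}"

definition Lambda_conj :: "nat \<Rightarrow> (real \<Rightarrow> complex set) \<Rightarrow> ereal" where
  "Lambda_conj n p = Inf {ereal (2 * pi / ln (R / r)) | r R.
       0 < r \<and> r < R \<and>
       (\<exists>f. conf_holo_on n (annulus r R) f \<and>
          (\<exists>\<rho>. r < \<rho> \<and> \<rho> < R \<and>
             conf_free_homotopic n (\<lambda>t. f (of_real \<rho> * exp (2 * pi * \<i> * of_real t))) p))}"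

end

theory Submission
  imports Defs
begin

text \<open>Multiplying a representing map pointwise by a nonvanishing holomorphic function \<open>h\<close> keeps it
  holomorphic on the same domain and turns every configuration by the argument of \<open>h\<close>.
  On an annulus, \<open>h z = z powi k\<close> turns the circle \<open>|z| = \<rho>\<close> \<open>k\<close> times around the origin and
  so appends \<open>\<Delta>\<^sup>2\<^sup>k\<close> to its free homotopy class.  On a rectangle, \<open>h z = exp (\<theta> (z - z\<^sub>0) / height)\<close>
  turns each vertical segment through the angle \<open>\<theta>\<close> and only stretches the horizontal sides by
  positive reals, which preserve \<open>E_tr\<close> and \<open>E_pb\<close>; \<open>\<theta> = \<plusminus>\<pi>\<close> appends \<open>\<Delta>\<^sup>\<plusminus>\<^sup>1\<close>.  So every
  annulus or rectangle admissible for one class is admissible for the other.  The homotopies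
  required are explicit reparametrisations of the given one that shrink the modulus of \<open>h\<close> to 1.\<close>

definition conf_scale :: "complex \<Rightarrow> complex set \<Rightarrow> complex set" where
  "conf_scale k S = (\<lambda>z. k * z) ` S"

lemma conf_scale_1 [simp]: "conf_scale 1 S = S"
  by (simp add: conf_scale_def)

lemma conf_scale_conf_scale [simp]: "conf_scale k (conf_scale k' S) = conf_scale (k * k') S"
  by (simp add: conf_scale_def image_image mult.assoc)

lemma conf_map_on_scale_compose:
  fixes A :: "'a::metric_space set" and B :: "'b::metric_space set"
  assumes q: "conf_map_on n B q" and \<phi>: "continuous_on A \<phi>" "\<phi> ` A \<subseteq> B"
    and \<kappa>: "continuous_on A \<kappa>" "\<And>x. x \<in> A \<Longrightarrow> \<kappa> x \<noteq> 0"
  shows "conf_map_on n A (\<lambda>x. conf_scale (\<kappa> x) (q (\<phi> x)))"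
  unfolding conf_map_on_def
proof
  fix x assume x: "x \<in> A"
  then have "\<phi> x \<in> B" using \<phi>(2) by blast
  then obtain e g where "e > 0" and g: "\<forall>i<n. continuous_on (B \<inter> ball (\<phi> x) e) (g i)"
    and lift: "\<forall>y\<in>B \<inter> ball (\<phi> x) e. inj_on (\<lambda>i. g i y) {..<n} \<and> q y = (\<lambda>i. g i y) ` {..<n}"
    using q unfolding conf_map_on_def by meson
  obtain d where "d > 0" and d: "\<forall>x'\<in>A. dist x' x < d \<longrightarrow> dist (\<phi> x') (\<phi> x) < e"
    using \<phi>(1) x \<open>e > 0\<close> unfolding continuous_on_iff by meson
  have sub: "\<phi> ` (A \<inter> ball x d) \<subseteq> B \<inter> ball (\<phi> x) e"
  proof
    fix w assume "w \<in> \<phi> ` (A \<inter> ball x d)"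
    then obtain x' where "x' \<in> A" "dist x x' < d" "w = \<phi> x'" by auto
    then show "w \<in> B \<inter> ball (\<phi> x) e"
      using d \<phi>(2) by (auto simp: dist_commute)
  qed
  show "\<exists>d>0. \<exists>g'::nat \<Rightarrow> 'a \<Rightarrow> complex. (\<forall>i<n. continuous_on (A \<inter> ball x d) (g' i)) \<and>
          (\<forall>y\<in>A \<inter> ball x d. inj_on (\<lambda>i. g' i y) {..<n} \<and>
             conf_scale (\<kappa> y) (q (\<phi> y)) = (\<lambda>i. g' i y) ` {..<n})"
  proof (intro exI conjI allI impI ballI)
    fix i assume "i < n"
    have "continuous_on (A \<inter> ball x d) (\<lambda>y. g i (\<phi> y))"
      by (rule continuous_on_compose2[OF g[rule_format, OF \<open>i < n\<close>]])
        (use continuous_on_subset[OF \<phi>(1)] sub in auto)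
    then show "continuous_on (A \<inter> ball x d) (\<lambda>y. \<kappa> y * g i (\<phi> y))"
      by (intro continuous_intros) (auto intro: continuous_on_subset[OF \<kappa>(1)])
  next
    fix y assume y: "y \<in> A \<inter> ball x d"
    then have "\<phi> y \<in> B \<inter> ball (\<phi> x) e" using sub by blast
    then have "inj_on (\<lambda>i. g i (\<phi> y)) {..<n}" and qy: "q (\<phi> y) = (\<lambda>i. g i (\<phi> y)) ` {..<n}"
      using lift by auto
    then show "inj_on (\<lambda>i. \<kappa> y * g i (\<phi> y)) {..<n}"
      using \<kappa>(2) y by (auto simp: inj_on_def)
    show "conf_scale (\<kappa> y) (q (\<phi> y)) = (\<lambda>i. \<kappa> y * g i (\<phi> y)) ` {..<n}"
      by (simp add: conf_scale_def qy image_image)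
  qed (fact \<open>d > 0\<close>)
qed

lemma conf_holo_on_scale:
  assumes f: "conf_holo_on n A f" and h: "h holomorphic_on A" "\<And>z. z \<in> A \<Longrightarrow> h z \<noteq> 0"
  shows "conf_holo_on n A (\<lambda>z. conf_scale (h z) (f z))"
  unfolding conf_holo_on_def
proof (intro conjI ballI)
  show "open A" using f by (simp add: conf_holo_on_def)
  fix x assume "x \<in> A"
  then obtain e g where "e > 0" and g: "\<forall>i<n. g i holomorphic_on (A \<inter> ball x e)"
    and lift: "\<forall>y\<in>A \<inter> ball x e. inj_on (\<lambda>i. g i y) {..<n} \<and> f y = (\<lambda>i. g i y) ` {..<n}"
    using f unfolding conf_holo_on_def by meson
  show "\<exists>e>0. \<exists>g'::nat \<Rightarrow> complex \<Rightarrow> complex. (\<forall>i<n. g' i holomorphic_on (A \<inter> ball x e)) \<and>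
          (\<forall>y\<in>A \<inter> ball x e. inj_on (\<lambda>i. g' i y) {..<n} \<and> conf_scale (h y) (f y) = (\<lambda>i. g' i y) ` {..<n})"
  proof (intro exI conjI allI impI ballI)
    fix i assume "i < n"
    then show "(\<lambda>y. h y * g i y) holomorphic_on (A \<inter> ball x e)"
      using g h(1) by (intro holomorphic_intros) (auto intro: holomorphic_on_subset)
  next
    fix y assume y: "y \<in> A \<inter> ball x e"
    then have "inj_on (\<lambda>i. g i y) {..<n}" and fy: "f y = (\<lambda>i. g i y) ` {..<n}"
      using lift by auto
    then show "inj_on (\<lambda>i. h y * g i y) {..<n}"
      using h(2) y by (auto simp: inj_on_def)
    show "conf_scale (h y) (f y) = (\<lambda>i. h y * g i y) ` {..<n}"
      by (simp add: conf_scale_def fy image_image)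
  qed (fact \<open>e > 0\<close>)
qed

abbreviation unit_square :: "(real \<times> real) set" where
  "unit_square \<equiv> {0..1} \<times> {0..1}"

definition real_scale_invariant :: "complex set set \<Rightarrow> bool" where
  "real_scale_invariant E \<longleftrightarrow> (\<forall>S\<in>E. \<forall>r::real. r \<noteq> 0 \<longrightarrow> conf_scale (of_real r) S \<in> E)"

lemma real_scale_invariantD:
  "real_scale_invariant E \<Longrightarrow> S \<in> E \<Longrightarrow> r \<noteq> 0 \<Longrightarrow> conf_scale (of_real r) S \<in> E"
  unfolding real_scale_invariant_def by blast

lemma real_scale_invariant_E_tr: "real_scale_invariant E_tr"
  unfolding real_scale_invariant_def E_tr_def conf_scale_def by auto

lemma real_scale_invariant_E_pb: "real_scale_invariant E_pb"
  unfolding real_scale_invariant_def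
proof (intro ballI allI impI)
  fix S and r :: real assume "S \<in> E_pb" "r \<noteq> 0"
  then obtain x w where "x \<in> \<real>" "Im w \<noteq> 0" and S: "S = {x, w, cnj w}"
    unfolding E_pb_def by blast
  have "conf_scale (of_real r) S = {of_real r * x, of_real r * w, cnj (of_real r * w)}"
    by (simp add: S conf_scale_def)
  moreover have "of_real r * x \<in> \<real>" "Im (of_real r * w) \<noteq> 0"
    using \<open>x \<in> \<real>\<close> \<open>Im w \<noteq> 0\<close> \<open>r \<noteq> 0\<close> by auto
  ultimately show "conf_scale (of_real r) S \<in> E_pb"
    unfolding E_pb_def by blast
qed

text \<open>A homotopy from \<open>p\<close> to \<open>q\<close> whose two ends stay nonzero real multiples of the ends of \<open>H\<close>
  (the upper one additionally turned by \<open>w\<close>); it inherits whatever end condition \<open>H\<close> satisfies.\<close>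
definition conf_scaled_deformation ::
  "nat \<Rightarrow> complex \<Rightarrow> (real \<times> real \<Rightarrow> complex set) \<Rightarrow> (real \<Rightarrow> complex set) \<Rightarrow> (real \<Rightarrow> complex set) \<Rightarrow> bool"
where
  "conf_scaled_deformation n w H p q \<longleftrightarrow>
     (\<exists>G. conf_map_on n unit_square G \<and> (\<forall>t\<in>{0..1}. G (0, t) = p t \<and> G (1, t) = q t) \<and>
        (\<forall>s\<in>{0..1}. \<exists>r s'. r \<noteq> 0 \<and> s' \<in> {0..1} \<and>
           G (s, 0) = conf_scale (of_real r) (H (s', 0)) \<and> G (s, 1) = conf_scale (of_real r * w) (H (s', 1))))"

lemma conf_scaled_deformation_cong:
  assumes "conf_scaled_deformation n w H p q"
    and "\<forall>t\<in>{0..1}. p' t = p t" "\<forall>t\<in>{0..1}. q' t = q t"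
  shows "conf_scaled_deformation n w H p' q'"
  using assms unfolding conf_scaled_deformation_def by auto

lemma conf_rel_homotopic_if_scaled_deformation:
  assumes "conf_scaled_deformation n w H p q" and E: "real_scale_invariant E"
    and "w \<in> \<real>" "w \<noteq> 0" and HE: "\<forall>s\<in>{0..1}. H (s, 0) \<in> E \<and> H (s, 1) \<in> E"
  shows "conf_rel_homotopic n E p q"
proof -
  from \<open>w \<in> \<real>\<close> obtain w' where w: "w = of_real w'" by (rule Reals_cases)
  obtain G where "conf_map_on n unit_square G" "\<forall>t\<in>{0..1}. G (0, t) = p t \<and> G (1, t) = q t"
    and ends: "\<forall>s\<in>{0..1}. \<exists>r s'. r \<noteq> 0 \<and> s' \<in> {0..1} \<and>
      G (s, 0) = conf_scale (of_real r) (H (s', 0)) \<and> G (s, 1) = conf_scale (of_real r * w) (H (s', 1))"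
    using assms(1) unfolding conf_scaled_deformation_def by blast
  moreover have "G (s, 0) \<in> E \<and> G (s, 1) \<in> E" if s: "s \<in> {0..1}" for s
  proof -
    obtain r s' where "r \<noteq> 0" "s' \<in> {0..1}" "G (s, 0) = conf_scale (of_real r) (H (s', 0))"
      and "G (s, 1) = conf_scale (of_real r * w) (H (s', 1))"
      using bspec[OF ends s] by blast
    moreover have "r * w' \<noteq> 0"
      using \<open>r \<noteq> 0\<close> \<open>w \<noteq> 0\<close> w by simp
    ultimately show ?thesis
      using HE real_scale_invariantD[OF E, of "H (s', 0)" r] real_scale_invariantD[OF E, of "H (s', 1)" "r * w'"]
      by (simp add: w)
  qed
  ultimately show ?thesis
    unfolding conf_rel_homotopic_def by blast
qed

lemma conf_free_homotopic_if_scaled_deformation: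
  assumes "conf_scaled_deformation n 1 H p q" and H: "\<forall>s\<in>{0..1}. H (s, 0) = H (s, 1)"
  shows "conf_free_homotopic n p q"
proof -
  obtain G where "conf_map_on n unit_square G" "\<forall>t\<in>{0..1}. G (0, t) = p t \<and> G (1, t) = q t"
    and ends: "\<forall>s\<in>{0..1}. \<exists>r s'. r \<noteq> 0 \<and> s' \<in> {0..1} \<and>
      G (s, 0) = conf_scale (of_real r) (H (s', 0)) \<and> G (s, 1) = conf_scale (of_real r * 1) (H (s', 1))"
    using assms(1) unfolding conf_scaled_deformation_def by blast
  moreover have "G (s, 0) = G (s, 1)" if s: "s \<in> {0..1}" for s
  proof -
    obtain r s' where "s' \<in> {0..1}" "G (s, 0) = conf_scale (of_real r) (H (s', 0))"
      "G (s, 1) = conf_scale (of_real r * 1) (H (s', 1))"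
      using bspec[OF ends s] by blast
    then show ?thesis using H by simp
  qed
  ultimately show ?thesis
    unfolding conf_free_homotopic_def by blast
qed

definition spin :: "complex set \<Rightarrow> real \<Rightarrow> real \<Rightarrow> complex set" where
  "spin X \<theta> t = conf_scale (cis (\<theta> * t)) X"

lemma half_twist_eq_spin: "half_twist n = spin (base_conf n) pi"
  by (simp add: fun_eq_iff half_twist_def spin_def conf_scale_def cis_conv_exp mult.commute)

lemma full_twist_eq_spin: "full_twist n = spin (base_conf n) (2 * pi)"
  by (simp add: fun_eq_iff full_twist_def spin_def conf_scale_def cis_conv_exp mult.commute)

lemma interpolation_pos:
  fixes l s :: real
  assumes "0 < l" "0 \<le> s" "s \<le> 1"
  shows "0 < (1 - s) * l + s"
proof (cases "s = 0")
  case False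
  then show ?thesis using assms by (intro add_nonneg_pos) auto
qed (use assms in simp)

lemma conf_map_on_spin_reparam:
  assumes H: "conf_map_on n unit_square H" and "0 < l"
    and "continuous_on unit_square \<sigma>" "continuous_on unit_square \<tau>" "continuous_on unit_square \<theta>"
    and "\<And>x. x \<in> unit_square \<Longrightarrow> \<sigma> x \<in> {0..1} \<and> \<tau> x \<in> {0..1}"
  shows "conf_map_on n unit_square
           (\<lambda>x. conf_scale (of_real ((1 - fst x) * l + fst x) * cis (\<theta> x)) (H (\<sigma> x, \<tau> x)))"
proof (rule conf_map_on_scale_compose[OF H])
  show "continuous_on unit_square (\<lambda>x. (\<sigma> x, \<tau> x))"
    using assms by (intro continuous_intros)
  show "(\<lambda>x. (\<sigma> x, \<tau> x)) ` unit_square \<subseteq> unit_square"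
    using assms(6) by blast
  show "continuous_on unit_square (\<lambda>x. of_real ((1 - fst x) * l + fst x) * cis (\<theta> x))"
    using assms by (intro continuous_intros)
  show "of_real ((1 - fst x) * l + fst x) * cis (\<theta> x) \<noteq> 0" if "x \<in> unit_square" for x
    using interpolation_pos[OF \<open>0 < l\<close>, of "fst x"] that
    by (auto simp: mem_Times_iff simp del: of_real_add of_real_mult of_real_diff)
qed

lemma conf_scaled_deformation_spin:
  assumes H: "conf_map_on n unit_square H" and "0 < l"
    and \<tau>: "continuous_on {0..1} \<tau>" "\<tau> ` {0..1} \<subseteq> {0..1}" "\<tau> 0 = 0" "\<tau> 1 = 1"
    and \<alpha>: "continuous_on {0..1} \<alpha>" "\<alpha> 0 = 0" "\<alpha> 1 = 1"
  shows "conf_scaled_deformation n (cis \<theta>) H (\<lambda>t. conf_scale (of_real l * cis (\<theta> * t)) (H (0, t)))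
           (\<lambda>t. conf_scale (cis (\<theta> * \<alpha> t)) (H (1, \<tau> t)))"
proof -
  define mix :: "(real \<Rightarrow> real) \<Rightarrow> real \<times> real \<Rightarrow> real"
    where "mix f x = (1 - fst x) * snd x + fst x * f (snd x)" for f x
  define G where
    "G x = conf_scale (of_real ((1 - fst x) * l + fst x) * cis (\<theta> * mix \<alpha> x)) (H (fst x, mix \<tau> x))" for x
  have mix_cont: "continuous_on unit_square (mix f)" if "continuous_on {0..1} f" for f
  proof -
    have "continuous_on unit_square (\<lambda>x. f (snd x))"
      by (rule continuous_on_compose2[OF that]) (auto intro: continuous_intros)
    then show ?thesis unfolding mix_def by (intro continuous_intros)
  qed
  have "mix \<tau> x \<in> {0..1}" if "x \<in> unit_square" for x
  proof -
    have "snd x \<in> {0..1}" using that by (auto simp: mem_Times_iff)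
    then have "\<tau> (snd x) \<in> {0..1}" using \<tau>(2) by blast
    then show ?thesis
      using that convex_bound_le[of "snd x" 1 "\<tau> (snd x)" "1 - fst x" "fst x"]
      by (auto simp: mix_def mem_Times_iff)
  qed
  then have "conf_map_on n unit_square G"
    unfolding G_def using \<open>0 < l\<close> \<tau>(1) \<alpha>(1)
    by (intro conf_map_on_spin_reparam[OF H] continuous_intros mix_cont) (auto simp: mem_Times_iff)
  moreover have "G (0, t) = conf_scale (of_real l * cis (\<theta> * t)) (H (0, t))"
    and "G (1, t) = conf_scale (cis (\<theta> * \<alpha> t)) (H (1, \<tau> t))" for t
    by (simp_all add: G_def mix_def)
  moreover have "G (s, 0) = conf_scale (of_real ((1 - s) * l + s)) (H (s, 0))"
    and "G (s, 1) = conf_scale (of_real ((1 - s) * l + s) * cis \<theta>) (H (s, 1))" for s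
    by (simp_all add: G_def mix_def \<tau>(3,4) \<alpha>(2,3))
  moreover have "(1 - s) * l + s \<noteq> 0" if "s \<in> {0..1}" for s
    using interpolation_pos[OF \<open>0 < l\<close>, of s] that by simp
  ultimately show ?thesis
    unfolding conf_scaled_deformation_def by (intro exI[of _ G]) blast
qed

lemma conf_scaled_deformation_append_spin:
  assumes H: "conf_map_on n unit_square H" and "0 < l" and H1: "\<forall>t\<in>{0..1}. H (1, t) = p t"
  shows "conf_scaled_deformation n (cis \<theta>) H (\<lambda>t. conf_scale (of_real l * cis (\<theta> * t)) (H (0, t)))
           (cjoin p (spin (p 1) \<theta>))"
proof (rule conf_scaled_deformation_cong[OF conf_scaled_deformation_spin[OF H \<open>0 < l\<close>,
      where \<tau> = "\<lambda>t. min 1 (2 * t)" and \<alpha> = "\<lambda>t. max 0 (2 * t - 1)"]])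
  show "continuous_on {0..1} (\<lambda>t::real. min 1 (2 * t))" "continuous_on {0..1} (\<lambda>t::real. max 0 (2 * t - 1))"
    by (intro continuous_intros)+
  show "(\<lambda>t::real. min 1 (2 * t)) ` {0..1} \<subseteq> {0..1}" by auto
  show "\<forall>t\<in>{0..1}. cjoin p (spin (p 1) \<theta>) t = conf_scale (cis (\<theta> * max 0 (2 * t - 1))) (H (1, min 1 (2 * t)))"
    using H1 by (auto simp: cjoin_def spin_def)
qed simp_all

lemma conf_scaled_deformation_remove_spin:
  assumes H: "conf_map_on n unit_square H" and "0 < l"
    and H1: "\<forall>t\<in>{0..1}. H (1, t) = cjoin p (spin (p 1) \<theta>) t"
  shows "conf_scaled_deformation n (cis (- \<theta>)) H (\<lambda>t. conf_scale (of_real l * cis (- \<theta> * t)) (H (0, t))) p"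
proof -
  \<comment> \<open>For \<open>s \<ge> 1/2\<close> the top edge runs back along the spin in \<open>H (1, \<cdot>)\<close>, which the angle factor undoes.\<close>
  define G where "G x = conf_scale (of_real ((1 - fst x) * l + fst x) * cis (- \<theta> * (snd x * min 1 (2 - 2 * fst x))))
      (H (min 1 (2 * fst x), snd x * min 1 (3/2 - fst x)))" for x
  have "snd x * min 1 (3/2 - fst x) \<in> {0..1}" if "x \<in> unit_square" for x
  proof -
    have "snd x * min 1 (3/2 - fst x) \<le> 1 * 1"
      using that by (intro mult_mono) (auto simp: mem_Times_iff)
    then show ?thesis using that by (auto simp: mem_Times_iff)
  qed
  then have G: "conf_map_on n unit_square G"
    unfolding G_def using \<open>0 < l\<close>
    by (intro conf_map_on_spin_reparam[OF H] continuous_intros) (auto simp: mem_Times_iff)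
  have G0: "G (0, t) = conf_scale (of_real l * cis (- \<theta> * t)) (H (0, t))" for t
    by (simp add: G_def)
  have G1: "G (1, t) = p t" if "t \<in> {0..1}" for t
    using H1 that by (simp add: G_def cjoin_def)
  have bottom: "G (s, 0) = conf_scale (of_real ((1 - s) * l + s)) (H (min 1 (2 * s), 0))" for s
    by (simp add: G_def)
  have top: "G (s, 1) = conf_scale (of_real ((1 - s) * l + s) * cis (- \<theta>)) (H (min 1 (2 * s), 1))"
    if "s \<in> {0..1}" for s
  proof (cases "s \<le> 1/2")
    case True
    then show ?thesis by (simp add: G_def)
  next
    case False
    define r where "r = (of_real ((1 - s) * l + s) :: complex)"
    have cis_cancel: "cis (- a) * cis a = 1" for a
      by (simp add: cis_mult)
    have "G (s, 1) = conf_scale (r * cis (- (\<theta> * (2 - 2 * s)))) (H (1, 3/2 - s))"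
      using False by (simp add: G_def r_def)
    also have "\<dots> = conf_scale (r * (cis (- (\<theta> * (2 - 2 * s))) * cis (\<theta> * (2 - 2 * s)))) (p 1)"
      using H1 that False by (simp add: cjoin_def spin_def algebra_simps)
    also have "\<dots> = conf_scale (r * (cis (- \<theta>) * cis \<theta>)) (p 1)"
      by (simp only: cis_cancel)
    also have "\<dots> = conf_scale (r * cis (- \<theta>)) (H (min 1 (2 * s), 1))"
      using H1 False by (simp add: cjoin_def spin_def mult.assoc)
    finally show ?thesis by (simp add: r_def)
  qed
  show ?thesis
    unfolding conf_scaled_deformation_def
  proof (intro exI[of _ G] conjI ballI)
    fix s :: real assume s: "s \<in> {0..1}"
    show "\<exists>r s'. r \<noteq> 0 \<and> s' \<in> {0..1} \<and> G (s, 0) = conf_scale (of_real r) (H (s', 0)) \<and>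
        G (s, 1) = conf_scale (of_real r * cis (- \<theta>)) (H (s', 1))"
      using interpolation_pos[OF \<open>0 < l\<close>, of s] s bottom[of s] top[OF s]
      by (intro exI[of _ "(1 - s) * l + s"] exI[of _ "min 1 (2 * s)"]) auto
  qed (use G G0 G1 in auto)
qed

definition pb_triple :: "real \<Rightarrow> complex set" where
  "pb_triple a = {0, cis a, - cis a}"

abbreviation pb_path :: "(real \<Rightarrow> complex set) \<Rightarrow> real \<Rightarrow> complex set" where
  "pb_path p \<equiv> cjoin (crev pb_connect) (cjoin p pb_connect)"

lemma base_conf_3: "base_conf 3 = pb_triple 0"
proof -
  have "{1..3::nat} = {1, 2, 3}" by auto
  then show ?thesis unfolding base_conf_def pb_triple_def by auto
qed

lemma pb_connect_eq: "pb_connect t = pb_triple (pi * t / 2)"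
  by (simp add: pb_connect_def pb_triple_def cis_conv_exp)

lemma conf_scale_pb_triple: "conf_scale (cis a) (pb_triple b) = pb_triple (a + b)"
  by (simp add: conf_scale_def pb_triple_def cis_mult)

lemma half_twist_3_eq: "half_twist 3 t = pb_triple (pi * t)"
  using conf_scale_pb_triple[of "pi * t" 0] by (simp add: half_twist_eq_spin spin_def base_conf_3 mult.commute)

lemma pb_triple_add_pi: "pb_triple (a + pi) = pb_triple a"
  by (auto simp: pb_triple_def cis_mult[symmetric])

lemma conf_scale_minus_one_pb_triple: "conf_scale (-1) (pb_triple a) = pb_triple a"
  by (auto simp: conf_scale_def pb_triple_def)

lemma pb_path_eq:
  "pb_path p t = (if t \<le> 1/2 then pb_triple (pi * (1 - 2 * t) / 2) else if t \<le> 3/4 then p (4 * t - 2)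
      else pb_triple (pi * (4 * t - 3) / 2))"
proof -
  have "2 * (2 * t - 1) = 4 * t - 2" "2 * (2 * t - 1) - 1 = 4 * t - 3" "(2 * t - 1 \<le> 1/2) = (t \<le> 3/4)"
    by auto
  then show ?thesis unfolding cjoin_def crev_def pb_connect_eq by auto
qed

lemma pb_path_half_twist_eq:
  "pb_path (cjoin p (half_twist 3)) t = (if t \<le> 1/2 then pb_triple (pi * (1 - 2 * t) / 2)
      else if t \<le> 5/8 then p (8 * t - 4) else if t \<le> 3/4 then pb_triple (pi * (8 * t - 5))
      else pb_triple (pi * (4 * t - 3) / 2))"
proof -
  have "2 * (2 * t - 1) = 4 * t - 2" "2 * (2 * t - 1) - 1 = 4 * t - 3" "(2 * t - 1 \<le> 1/2) = (t \<le> 3/4)"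
    "2 * (4 * t - 2) = 8 * t - 4" "2 * (4 * t - 2) - 1 = 8 * t - 5" "(4 * t - 2 \<le> 1/2) = (t \<le> 5/8)"
    by auto
  then show ?thesis unfolding cjoin_def crev_def pb_connect_eq half_twist_3_eq by auto
qed

text \<open>The half twist, like \<open>pb_connect\<close>, consists of rotations of \<open>pb_triple\<close>s, so along
  \<open>pb_path\<close> it can be slid from right after \<open>p\<close> to the very end, where it becomes a rotation of
  the whole loop; the following reparametrisations of time and angle perform the slide.\<close>
definition pb_twist_time :: "real \<Rightarrow> real" where
  "pb_twist_time t = t + min (max (t - 1/2) 0) (1/8) - min (max (t - 5/8) 0) (1/8)"

definition pb_twist_angle :: "real \<Rightarrow> real" where
  "pb_twist_angle t = 8 * min (max (t - 5/8) 0) (1/8)"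

definition pb_untwist_time :: "real \<Rightarrow> real" where
  "pb_untwist_time t = t - min (max (t - 1/2) 0) (1/4) / 2 + max (t - 3/4) 0 / 2"

definition pb_untwist_angle :: "real \<Rightarrow> real" where
  "pb_untwist_angle t = 10 * min (max (t - 3/4) 0) (1/12) + max (t - 5/6) 0"

lemma pb_path_append_half_twist:
  assumes "p 1 = base_conf 3" and "t \<in> {0..1}"
  shows "conf_scale (cis (pi * pb_twist_angle t)) (pb_path p (pb_twist_time t)) = pb_path (cjoin p (half_twist 3)) t"
proof -
  consider "t \<le> 1/2" | "1/2 < t" "t \<le> 5/8" | "5/8 < t" "t \<le> 3/4" | "3/4 < t"
    by linarith
  then show ?thesis
  proof cases
    case 1
    then have "pb_twist_time t = t" "pb_twist_angle t = 0"
      unfolding pb_twist_time_def pb_twist_angle_def by auto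
    then show ?thesis using 1 by (simp only: pb_path_half_twist_eq) (simp add: pb_path_eq)
  next
    case 2
    then have "pb_twist_time t = 2 * t - 1/2" "pb_twist_angle t = 0"
      unfolding pb_twist_time_def pb_twist_angle_def by auto
    moreover have "4 * (2 * t - 1/2) - 2 = 8 * t - 4" by simp
    ultimately show ?thesis using 2 by (simp only: pb_path_half_twist_eq) (simp add: pb_path_eq)
  next
    case 3
    then have "pb_twist_time t = 3/4" "pb_twist_angle t = 8 * t - 5"
      unfolding pb_twist_time_def pb_twist_angle_def by auto
    then show ?thesis
      using 3 assms(1) conf_scale_pb_triple[of "pi * (8 * t - 5)" 0]
      by (simp only: pb_path_half_twist_eq) (simp add: pb_path_eq base_conf_3)
  next
    case 4
    then have "pb_twist_time t = t" "pb_twist_angle t = 1"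
      unfolding pb_twist_time_def pb_twist_angle_def by auto
    then show ?thesis
      using 4 by (simp only: pb_path_half_twist_eq) (simp add: pb_path_eq conf_scale_minus_one_pb_triple)
  qed
qed

lemma pb_path_remove_half_twist:
  assumes "t \<in> {0..1}"
  shows "conf_scale (cis (- pi * pb_untwist_angle t)) (pb_path (cjoin p (half_twist 3)) (pb_untwist_time t)) = pb_path p t"
proof -
  consider "t \<le> 1/2" | "1/2 < t" "t \<le> 3/4" | "3/4 < t" "t \<le> 5/6" | "5/6 < t"
    by linarith
  then show ?thesis
  proof cases
    case 1
    then have "pb_untwist_time t = t" "pb_untwist_angle t = 0"
      unfolding pb_untwist_time_def pb_untwist_angle_def by (auto simp: field_simps)
    then show ?thesis using 1 by (simp only: pb_path_half_twist_eq) (simp add: pb_path_eq)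
  next
    case 2
    then have "pb_untwist_time t = t / 2 + 1/4" "pb_untwist_angle t = 0"
      unfolding pb_untwist_time_def pb_untwist_angle_def by (auto simp: field_simps)
    moreover have "8 * (t / 2 + 1/4) - 4 = 4 * t - 2" by simp
    ultimately show ?thesis using 2 by (simp only: pb_path_half_twist_eq) (simp add: pb_path_eq)
  next
    case 3
    then have "pb_untwist_time t = 3 * t / 2 - 1/2" "pb_untwist_angle t = 10 * t - 15/2"
      unfolding pb_untwist_time_def pb_untwist_angle_def by (auto simp: field_simps)
    then have "conf_scale (cis (- pi * pb_untwist_angle t)) (pb_path (cjoin p (half_twist 3)) (pb_untwist_time t))
        = pb_triple (- pi * (10 * t - 15/2) + pi * (8 * (3 * t / 2 - 1/2) - 5))"
      using 3 by (simp only: pb_path_half_twist_eq) (simp add: conf_scale_pb_triple)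
    also have "\<dots> = pb_triple (pi * (4 * t - 3) / 2)"
      by (rule arg_cong[where f = pb_triple]) (simp add: field_simps)
    finally show ?thesis
      using 3 by (simp add: pb_path_eq)
  next
    case 4
    then have "pb_untwist_time t = 3 * t / 2 - 1/2" "pb_untwist_angle t = t"
      unfolding pb_untwist_time_def pb_untwist_angle_def by (auto simp: field_simps)
    then have "conf_scale (cis (- pi * pb_untwist_angle t)) (pb_path (cjoin p (half_twist 3)) (pb_untwist_time t))
        = pb_triple (- pi * t + pi * (4 * (3 * t / 2 - 1/2) - 3) / 2)"
      using 4 by (simp only: pb_path_half_twist_eq) (simp add: conf_scale_pb_triple)
    also have "\<dots> = pb_triple (- pi * t + pi * (4 * (3 * t / 2 - 1/2) - 3) / 2 + pi)"
      by (rule pb_triple_add_pi[symmetric])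
    also have "\<dots> = pb_triple (pi * (4 * t - 3) / 2)"
      by (rule arg_cong[where f = pb_triple]) (simp add: field_simps)
    finally show ?thesis
      using 4 by (simp add: pb_path_eq)
  qed
qed

lemma pb_twist_time_range: "t \<in> {0..1} \<Longrightarrow> pb_twist_time t \<in> {0..1}"
  by (auto simp: pb_twist_time_def)

lemma pb_untwist_time_range: "t \<in> {0..1} \<Longrightarrow> pb_untwist_time t \<in> {0..1}"
  by (auto simp: pb_untwist_time_def min_def max_def field_simps)

lemma conf_scaled_deformation_pb_append_half_twist:
  assumes H: "conf_map_on 3 unit_square H" and "0 < l"
    and H1: "\<forall>t\<in>{0..1}. H (1, t) = pb_path p t" and "p 1 = base_conf 3"
  shows "conf_scaled_deformation 3 (cis pi) H (\<lambda>t. conf_scale (of_real l * cis (pi * t)) (H (0, t)))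
           (pb_path (cjoin p (half_twist 3)))"
proof (rule conf_scaled_deformation_cong[OF conf_scaled_deformation_spin[OF H \<open>0 < l\<close>,
      where \<tau> = pb_twist_time and \<alpha> = pb_twist_angle]])
  show "continuous_on {0..1} pb_twist_time" "continuous_on {0..1} pb_twist_angle"
    unfolding pb_twist_time_def pb_twist_angle_def by (intro continuous_intros)+
  show "pb_twist_time ` {0..1} \<subseteq> {0..1}"
    using pb_twist_time_range by blast
  show "\<forall>t\<in>{0..1}. pb_path (cjoin p (half_twist 3)) t =
      conf_scale (cis (pi * pb_twist_angle t)) (H (1, pb_twist_time t))"
    using H1 pb_twist_time_range pb_path_append_half_twist[of p] \<open>p 1 = base_conf 3\<close> by simp
qed (simp_all add: pb_twist_time_def pb_twist_angle_def)

lemma conf_scaled_deformation_pb_remove_half_twist: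
  assumes H: "conf_map_on 3 unit_square H" and "0 < l"
    and H1: "\<forall>t\<in>{0..1}. H (1, t) = pb_path (cjoin p (half_twist 3)) t"
  shows "conf_scaled_deformation 3 (cis (- pi)) H (\<lambda>t. conf_scale (of_real l * cis (- pi * t)) (H (0, t)))
           (pb_path p)"
proof (rule conf_scaled_deformation_cong[OF conf_scaled_deformation_spin[OF H \<open>0 < l\<close>,
      where \<tau> = pb_untwist_time and \<alpha> = pb_untwist_angle]])
  show "continuous_on {0..1} pb_untwist_time" "continuous_on {0..1} pb_untwist_angle"
    unfolding pb_untwist_time_def pb_untwist_angle_def by (auto intro!: continuous_intros)
  show "pb_untwist_time ` {0..1} \<subseteq> {0..1}"
    using pb_untwist_time_range by blast
  show "\<forall>t\<in>{0..1}. pb_path p t = conf_scale (cis (- pi * pb_untwist_angle t)) (H (1, pb_untwist_time t))"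
    using H1 pb_untwist_time_range pb_path_remove_half_twist by simp
qed (simp_all add: pb_untwist_time_def pb_untwist_angle_def)

lemma conf_rel_homotopic_cong:
  assumes "conf_rel_homotopic n E p q" and "\<forall>t\<in>{0..1}. p' t = p t"
  shows "conf_rel_homotopic n E p' q"
  using assms unfolding conf_rel_homotopic_def by auto

lemma conf_free_homotopic_cong:
  assumes "conf_free_homotopic n p q" and "\<forall>t\<in>{0..1}. p' t = p t"
  shows "conf_free_homotopic n p' q"
  using assms unfolding conf_free_homotopic_def by auto

lemma Lambda_rel_mono:
  assumes "\<And>a b c d f. a < b \<Longrightarrow> c < d \<Longrightarrow> conf_holo_on n (rect a b c d) f \<Longrightarrow>
      represents_rect n E p a b c d f \<Longrightarrow> \<exists>f'. conf_holo_on n (rect a b c d) f' \<and> represents_rect n E q a b c d f'"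
  shows "Lambda_rel n E q \<le> Lambda_rel n E p"
  unfolding Lambda_rel_def by (rule Inf_superset_mono) (use assms in fastforce)

lemma Lambda_conj_mono:
  assumes "\<And>r R \<rho> f. 0 < r \<Longrightarrow> r < \<rho> \<Longrightarrow> \<rho> < R \<Longrightarrow> conf_holo_on n (annulus r R) f \<Longrightarrow>
      conf_free_homotopic n (\<lambda>t. f (of_real \<rho> * exp (2 * pi * \<i> * of_real t))) p \<Longrightarrow>
      \<exists>f'. conf_holo_on n (annulus r R) f' \<and> conf_free_homotopic n (\<lambda>t. f' (of_real \<rho> * exp (2 * pi * \<i> * of_real t))) q"
  shows "Lambda_conj n q \<le> Lambda_conj n p"
  unfolding Lambda_conj_def by (rule Inf_superset_mono) (use assms in fastforce)

lemma represents_rect_spin: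
  assumes "c < d" and f: "conf_holo_on n (rect a b c d) f" and rep: "represents_rect n E p a b c d f"
    and E: "real_scale_invariant E" and "cis \<theta> \<in> \<real>"
    and deform: "\<And>l H. 0 < l \<Longrightarrow> conf_map_on n unit_square H \<Longrightarrow> \<forall>t\<in>{0..1}. H (1, t) = p t \<Longrightarrow>
        conf_scaled_deformation n (cis \<theta>) H (\<lambda>t. conf_scale (of_real l * cis (\<theta> * t)) (H (0, t))) q"
  shows "\<exists>f'. conf_holo_on n (rect a b c d) f' \<and> represents_rect n E q a b c d f'"
proof -
  define h where "h z = exp (of_real (\<theta> / (d - c)) * (z - Complex a c))" for z
  define f' where "f' z = conf_scale (h z) (f z)" for z
  have h_vertical: "h (Complex x (c + t * (d - c))) = of_real (exp (\<theta> * (x - a) / (d - c))) * cis (\<theta> * t)"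
    for x t
  proof -
    have arg: "of_real (\<theta> / (d - c)) * (Complex x (c + t * (d - c)) - Complex a c) =
          of_real (\<theta> * (x - a) / (d - c)) + \<i> * of_real (\<theta> * t)"
      using \<open>c < d\<close> by (simp add: complex_eq_iff field_simps)
    show ?thesis by (simp only: h_def arg exp_add exp_of_real cis_conv_exp)
  qed
  have "conf_holo_on n (rect a b c d) f'"
    unfolding f'_def h_def by (rule conf_holo_on_scale[OF f]) (auto intro!: holomorphic_intros)
  moreover have "represents_rect n E q a b c d f'"
    unfolding represents_rect_def
  proof (intro conjI allI impI)
    have "conf_map_on n (rect_closed a b c d) f"
      using rep unfolding represents_rect_def by blast
    then show "conf_map_on n (rect_closed a b c d) f'"
      unfolding f'_def
      by (rule conf_map_on_scale_compose[OF _ continuous_on_id])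
        (use \<open>c < d\<close> in \<open>auto simp: h_def intro!: continuous_intros\<close>)
  next
    fix x assume x: "a < x \<and> x < b"
    define L where "L = exp (\<theta> * (x - a) / (d - c))"
    obtain w where w: "cis \<theta> = of_real w" using \<open>cis \<theta> \<in> \<real>\<close> by (rule Reals_cases)
    then have "w \<noteq> 0" by (metis cis_neq_zero of_real_0)
    have "f (Complex x c) \<in> E" "f (Complex x d) \<in> E"
      using rep x unfolding represents_rect_def by blast+
    moreover have "h (Complex x c) = of_real L" "h (Complex x d) = of_real (L * w)"
      using h_vertical[of x 0] h_vertical[of x 1] w by (simp_all add: L_def)
    moreover have "L \<noteq> 0" "L * w \<noteq> 0"
      using \<open>w \<noteq> 0\<close> by (simp_all add: L_def)
    ultimately show "f' (Complex x c) \<in> E" "f' (Complex x d) \<in> E"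
      unfolding f'_def by (simp_all add: real_scale_invariantD[OF E] del: of_real_mult)
    from rep x obtain H where H: "conf_map_on n unit_square H"
      and H01: "\<forall>t\<in>{0..1}. H (0, t) = f (Complex x (c + t * (d - c))) \<and> H (1, t) = p t"
      and HE: "\<forall>s\<in>{0..1}. H (s, 0) \<in> E \<and> H (s, 1) \<in> E"
      unfolding represents_rect_def conf_rel_homotopic_def by blast
    have "conf_rel_homotopic n E (\<lambda>t. conf_scale (of_real L * cis (\<theta> * t)) (H (0, t))) q"
      using deform[of L H] H H01 HE E \<open>cis \<theta> \<in> \<real>\<close>
      by (intro conf_rel_homotopic_if_scaled_deformation) (auto simp: L_def)
    then show "conf_rel_homotopic n E (\<lambda>t. f' (Complex x (c + t * (d - c)))) q"
      by (rule conf_rel_homotopic_cong) (simp add: H01 f'_def h_vertical L_def)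
  qed
  ultimately show ?thesis by blast
qed

lemma annulus_spin:
  assumes "0 < r" and f: "conf_holo_on n (annulus r R) f" and "0 < \<rho>"
    and hom: "conf_free_homotopic n (\<lambda>t. f (of_real \<rho> * exp (2 * pi * \<i> * of_real t))) p"
    and deform: "\<And>l H. 0 < l \<Longrightarrow> conf_map_on n unit_square H \<Longrightarrow> \<forall>t\<in>{0..1}. H (1, t) = p t \<Longrightarrow>
        conf_scaled_deformation n (cis (2 * pi * of_int k)) H
          (\<lambda>t. conf_scale (of_real l * cis (2 * pi * of_int k * t)) (H (0, t))) q"
  shows "\<exists>f'. conf_holo_on n (annulus r R) f' \<and>
           conf_free_homotopic n (\<lambda>t. f' (of_real \<rho> * exp (2 * pi * \<i> * of_real t))) q"
proof (intro exI conjI)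
  have nonzero: "z \<noteq> 0" if "z \<in> annulus r R" for z
    using that \<open>0 < r\<close> by (auto simp: annulus_def)
  show "conf_holo_on n (annulus r R) (\<lambda>z. conf_scale (z powi k) (f z))"
    using nonzero by (intro conf_holo_on_scale[OF f]) (auto intro!: holomorphic_intros)
  have circle: "(of_real \<rho> * exp (2 * pi * \<i> * of_real t)) powi k = of_real (\<rho> powi k) * cis (2 * pi * of_int k * t)"
    for t
    by (simp add: power_int_mult_distrib exp_power_int cis_conv_exp mult_ac)
  from hom obtain H where H: "conf_map_on n unit_square H"
    and H01: "\<forall>t\<in>{0..1}. H (0, t) = f (of_real \<rho> * exp (2 * pi * \<i> * of_real t)) \<and> H (1, t) = p t"
    and H_loop: "\<forall>s\<in>{0..1}. H (s, 0) = H (s, 1)"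
    unfolding conf_free_homotopic_def by blast
  have "conf_free_homotopic n (\<lambda>t. conf_scale (of_real (\<rho> powi k) * cis (2 * pi * of_int k * t)) (H (0, t))) q"
    using deform[of "\<rho> powi k" H] H H01 H_loop \<open>0 < \<rho>\<close>
    by (intro conf_free_homotopic_if_scaled_deformation) simp_all
  then show "conf_free_homotopic n (\<lambda>t. conf_scale ((of_real \<rho> * exp (2 * pi * \<i> * of_real t)) powi k)
      (f (of_real \<rho> * exp (2 * pi * \<i> * of_real t)))) q"
    by (rule conf_free_homotopic_cong) (use H01 in \<open>simp only: circle, auto\<close>)
qed

lemma Lambda_rel_spin_le:
  assumes "real_scale_invariant E" and "cis \<theta> \<in> \<real>"
    and "\<And>l H. 0 < l \<Longrightarrow> conf_map_on n unit_square H \<Longrightarrow> \<forall>t\<in>{0..1}. H (1, t) = p t \<Longrightarrow>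
        conf_scaled_deformation n (cis \<theta>) H (\<lambda>t. conf_scale (of_real l * cis (\<theta> * t)) (H (0, t))) q"
  shows "Lambda_rel n E q \<le> Lambda_rel n E p"
  by (rule Lambda_rel_mono) (rule represents_rect_spin[OF _ _ _ assms])

lemma Lambda_conj_spin_le:
  assumes "\<And>l H. 0 < l \<Longrightarrow> conf_map_on n unit_square H \<Longrightarrow> \<forall>t\<in>{0..1}. H (1, t) = p t \<Longrightarrow>
        conf_scaled_deformation n (cis (2 * pi * of_int k)) H
          (\<lambda>t. conf_scale (of_real l * cis (2 * pi * of_int k * t)) (H (0, t))) q"
  shows "Lambda_conj n q \<le> Lambda_conj n p"
  by (rule Lambda_conj_mono) (rule annulus_spin[OF _ _ _ _ assms]; simp)

lemma Lambda_conj_append_full_twist: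
  assumes "b 1 = base_conf n"
  shows "Lambda_conj n b = Lambda_conj n (cjoin b (full_twist n))"
proof (rule antisym)
  have twist: "full_twist n = spin (b 1) (2 * pi)"
    by (simp add: assms full_twist_eq_spin)
  show "Lambda_conj n (cjoin b (full_twist n)) \<le> Lambda_conj n b"
    by (rule Lambda_conj_spin_le[where k = 1])
      (use conf_scaled_deformation_append_spin[where p = b and \<theta> = "2 * pi"] in \<open>simp add: twist\<close>)
  show "Lambda_conj n b \<le> Lambda_conj n (cjoin b (full_twist n))"
    by (rule Lambda_conj_spin_le[where k = "-1"])
      (use conf_scaled_deformation_remove_spin[where p = b and \<theta> = "2 * pi"] in \<open>simp add: twist\<close>)
qed

lemma Lambda_tr_append_half_twist:
  assumes "b 1 = base_conf n"
  shows "Lambda_tr n b = Lambda_tr n (cjoin b (half_twist n))"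
  unfolding Lambda_tr_def
proof (rule antisym)
  have twist: "half_twist n = spin (b 1) pi"
    by (simp add: assms half_twist_eq_spin)
  show "Lambda_rel n E_tr (cjoin b (half_twist n)) \<le> Lambda_rel n E_tr b"
    by (rule Lambda_rel_spin_le[OF real_scale_invariant_E_tr, where \<theta> = pi])
      (use conf_scaled_deformation_append_spin[where p = b and \<theta> = pi] in \<open>simp_all add: twist\<close>)
  show "Lambda_rel n E_tr b \<le> Lambda_rel n E_tr (cjoin b (half_twist n))"
    by (rule Lambda_rel_spin_le[OF real_scale_invariant_E_tr, where \<theta> = "- pi"])
      (use conf_scaled_deformation_remove_spin[where p = b and \<theta> = pi] in \<open>simp_all add: twist cis_cnj[symmetric]\<close>)
qed

lemma Lambda_pb_append_half_twist:
  assumes "b 1 = base_conf 3"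
  shows "Lambda_pb b = Lambda_pb (cjoin b (half_twist 3))"
  unfolding Lambda_pb_def
proof (rule antisym)
  show "Lambda_rel 3 E_pb (pb_path (cjoin b (half_twist 3))) \<le> Lambda_rel 3 E_pb (pb_path b)"
    by (rule Lambda_rel_spin_le[OF real_scale_invariant_E_pb, where \<theta> = pi])
      (use conf_scaled_deformation_pb_append_half_twist assms in simp_all)
  show "Lambda_rel 3 E_pb (pb_path b) \<le> Lambda_rel 3 E_pb (pb_path (cjoin b (half_twist 3)))"
    by (rule Lambda_rel_spin_le[OF real_scale_invariant_E_pb, where \<theta> = "- pi"])
      (use conf_scaled_deformation_pb_remove_half_twist in \<open>simp_all add: cis_cnj[symmetric]\<close>)
qed

theorem lemma1:
  shows "(\<forall>(n::nat) b. conf_loop n (base_conf n) b \<longrightarrow>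
            Lambda_conj n b = Lambda_conj n (cjoin b (full_twist n)) \<and>
            Lambda_tr n b = Lambda_tr n (cjoin b (half_twist n))) \<and>
         (\<forall>b. conf_loop 3 (base_conf 3) b \<longrightarrow>
            Lambda_pb b = Lambda_pb (cjoin b (half_twist 3)))"
  by (simp add: conf_loop_def Lambda_conj_append_full_twist Lambda_tr_append_half_twist
      Lambda_pb_append_half_twist)

end
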